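(* Let $\mathsf{k}$ be a field, $n\ge2$, $R=\mathsf{k}[x_1,\dots,x_r]$, $S=R[t]$, $A=\mathsf{k}[t]/(t^n)$, $F_B\in Q_R$ homogeneous of degree $j_B$, $I_B=\operatorname{Ann}_R(F_B)$, $B=R/I_B$. Let $G\in Q_R$ be homogeneous of degree $j_B+n-1$ and $F=T^{[n-1]}F_B+G\in Q_S$. Then $C=S/\operatorname{Ann}_S(F)$ is a free extension with base $A$ and fiber $B$ (via $\iota,\pi$) if and only if $(I_B)^2\circ G=0$.
   Context: $Q_R=\mathsf{k}_{DP}[X_1,\dots,X_r]$, $Q_S=\mathsf{k}_{DP}[X_1,\dots,X_r,T]$ divided power rings with contraction action ($x_i^s\circ X_i^{[k]}=X_i^{[k-s]}$ for $k\ge s$, else $0$; likewise $t$ on $T$); $\operatorname{Ann}$ denotes annihilator under this action. $\iota:A\to C$ is induced by $\mathsf{k}[t]\subset S$, $\pi:C\to B$ by $t\mapsto0$, $x_i\mapsto x_i$. $C$ is a free extension with base $A$ and fiber $B$ if $\iota$ makes $C$ a free $A$-module and $\pi$ is surjective with $\ker\pi=(\iota(A_+))C$. *)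

theory Defs
  imports "HOL-Library.Poly_Mapping"
begin

text \<open>Polynomials (and divided power polynomials) in the variables indexed by nat:
  a monomial is an exponent vector nat =>0 nat, an element is a finitely supported
  coefficient function on monomials. Variable 0 plays the role of t (resp. T),
  variables 1..r play the role of x_1..x_r (resp. X_1..X_r).\<close>

type_synonym 'k mpoly = "(nat \<Rightarrow>\<^sub>0 nat) \<Rightarrow>\<^sub>0 'k"

definition polys_in :: "nat set \<Rightarrow> 'k::zero mpoly set" where
  "polys_in V = {f. \<forall>m\<in>Poly_Mapping.keys f. Poly_Mapping.keys m \<subseteq> V}"

text \<open>R = k[x_1..x_r] (also used for Q_R as a set), S = R[t] (also Q_S), k[t].\<close>
definition Rset :: "nat \<Rightarrow> 'k::zero mpoly set" where "Rset r = polys_in {1..r}"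
definition Sset :: "nat \<Rightarrow> 'k::zero mpoly set" where "Sset r = polys_in {0..r}"
definition ktset :: "'k::zero mpoly set" where "ktset = polys_in {0}"

text \<open>the variable t, and the monomial t^k (also the divided power T^[k])\<close>
definition tpow :: "nat \<Rightarrow> 'k::{zero,one} mpoly" where
  "tpow k = Poly_Mapping.single (Poly_Mapping.single 0 k) 1"

definition mdeg :: "(nat \<Rightarrow>\<^sub>0 nat) \<Rightarrow> nat" where
  "mdeg m = (\<Sum>i\<in>Poly_Mapping.keys m. Poly_Mapping.lookup m i)"

definition homogeneous :: "nat \<Rightarrow> 'k::zero mpoly \<Rightarrow> bool" where
  "homogeneous d F \<longleftrightarrow> (\<forall>m\<in>Poly_Mapping.keys F. mdeg m = d)"

text \<open>Contraction action of polynomials on divided powers: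
  x^a o X^[b] = X^[b-a] if a <= b, else 0; extended bilinearly.
  Coefficientwise: (f o F)_c = sum_a f_a F_(a+c).\<close>
definition contract :: "'k::comm_semiring_1 mpoly \<Rightarrow> 'k mpoly \<Rightarrow> 'k mpoly" where
  "contract f F = Abs_poly_mapping (\<lambda>c. \<Sum>a\<in>Poly_Mapping.keys f. Poly_Mapping.lookup f a * Poly_Mapping.lookup F (a + c))"

definition Ann :: "nat set \<Rightarrow> 'k::comm_semiring_1 mpoly \<Rightarrow> 'k mpoly set" where
  "Ann V F = {f \<in> polys_in V. contract f F = 0}"

definition ideal_sq :: "'k::comm_ring_1 mpoly set \<Rightarrow> 'k mpoly set" where
  "ideal_sq I = {p. \<exists>fs gs. length fs = length gs \<and> set fs \<subseteq> I \<and> set gs \<subseteq> I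
                     \<and> p = sum_list (map2 (*) fs gs)}"

definition t_to_0 :: "'k::zero mpoly \<Rightarrow> 'k mpoly" where
  "t_to_0 s = Abs_poly_mapping (\<lambda>m. if Poly_Mapping.lookup m 0 = 0 then Poly_Mapping.lookup s m else 0)"

text \<open>Free extension, with C = S/J, A = k[t]/(t^n), B = R/IB, iota : A -> C induced by
  k[t] \<subseteq> S and pi : C -> B induced by t |-> 0, all unfolded on representatives:
  (1) C is a free A-module via iota: there is a set Bs of representatives in S whose classes
      form an A-basis of C (spanning and A-linear independence, A acting through iota);
  (2) pi is surjective;
  (3) ker pi = iota(A_+) C, where A_+ = (t)/(t^n); the preimage in S of the ideal of C
      generated by iota(A_+) is J + t S.\<close>
definition free_extension :: "nat \<Rightarrow> nat \<Rightarrow> 'k::field mpoly set \<Rightarrow> 'k mpoly set \<Rightarrow> bool" where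
  "free_extension r n J IB \<longleftrightarrow>
     (\<exists>Bs \<subseteq> Sset r.
        (\<forall>s\<in>Sset r. \<exists>Bs0 a. finite Bs0 \<and> Bs0 \<subseteq> Bs \<and> (\<forall>b\<in>Bs0. a b \<in> ktset)
              \<and> s - (\<Sum>b\<in>Bs0. a b * b) \<in> J)
      \<and> (\<forall>Bs0 a. finite Bs0 \<and> Bs0 \<subseteq> Bs \<and> (\<forall>b\<in>Bs0. a b \<in> ktset)
              \<and> (\<Sum>b\<in>Bs0. a b * b) \<in> J
              \<longrightarrow> (\<forall>b\<in>Bs0. \<exists>q\<in>ktset. a b = tpow n * q)))
   \<and> (\<forall>g\<in>Rset r. \<exists>s\<in>Sset r. t_to_0 s - g \<in> IB)
   \<and> (\<forall>s\<in>Sset r. t_to_0 s \<in> IB \<longleftrightarrow> (\<exists>u\<in>Sset r. s - tpow 1 * u \<in> J))"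

end

theory Submission
  imports Defs "HOL.Vector_Spaces" "HOL-Library.FuncSet"
begin

text \<open>Work modulo \<open>J = Ann(F)\<close>, \<open>F = T\<^bsup>[n-1]\<^esup> F\<^sub>B + G\<close>. For \<open>g \<in> R\<close> one has
  \<open>t\<^sup>n \<in> J\<close>, and \<open>t\<^bsup>n-1\<^esup> g \<in> J\<close> iff \<open>g \<in> I\<^sub>B\<close>; moreover every \<open>e \<in> I\<^sub>B\<close> acts on \<open>F\<close> as on \<open>G\<close>.
  Hence \<open>e \<in> I\<^sub>B\<close> lies in \<open>tC\<close> exactly when \<open>e \<circ> G = h \<circ> F\<^sub>B\<close> for some \<open>h \<in> R\<close>, and then
  \<open>e \<equiv> t\<^bsup>n-1\<^esup> h\<close> modulo \<open>J\<close>. By Macaulay duality (an element of \<open>Q\<^sub>R\<close> killed by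
  \<open>Ann(F\<^sub>B)\<close> lies in \<open>R \<circ> F\<^sub>B\<close>) this condition on all \<open>e \<in> I\<^sub>B\<close> is equivalent to
  \<open>I\<^sub>B\<^sup>2 \<circ> G = 0\<close>. Under it, lifts of a \<open>k\<close>-basis of \<open>B\<close> span \<open>C\<close> over \<open>k[t]\<close>, and a
  relation with coefficients \<open>a\<^sub>b\<close> forces \<open>t \<mid> a\<^sub>b\<close> repeatedly, so \<open>t\<^sup>n \<mid> a\<^sub>b\<close>.\<close>

abbreviation lookup :: "('a \<Rightarrow>\<^sub>0 'b::zero) \<Rightarrow> 'a \<Rightarrow> 'b" where
  "lookup \<equiv> Poly_Mapping.lookup"

abbreviation keys :: "('a \<Rightarrow>\<^sub>0 'b::zero) \<Rightarrow> 'a set" where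
  "keys \<equiv> Poly_Mapping.keys"

lemma keys_add_monomial: "keys ((a::nat \<Rightarrow>\<^sub>0 nat) + b) = keys a \<union> keys b"
  by (auto simp: in_keys_iff lookup_add)

lemma poly_mapping_sum_singles:
  "(p::'a \<Rightarrow>\<^sub>0 'b::comm_monoid_add) = (\<Sum>a\<in>keys p. Poly_Mapping.single a (lookup p a))"
proof (rule poly_mapping_eqI)
  fix k
  show "lookup p k = lookup (\<Sum>a\<in>keys p. Poly_Mapping.single a (lookup p a)) k"
    by (cases "k \<in> keys p") (auto simp: lookup_sum lookup_single when_def in_keys_iff)
qed

section \<open>The contraction action\<close>

lemma lookup_contract:
  "lookup (contract f F) c = (\<Sum>a\<in>keys f. lookup f a * lookup F (a + c))"
proof -
  have "{c. (\<Sum>a\<in>keys f. lookup f a * lookup F (a + c)) \<noteq> 0} \<subseteq> (\<Union>a\<in>keys f. (\<lambda>c. a + c) -` keys F)"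
    by (auto elim!: sum.not_neutral_contains_not_neutral simp: in_keys_iff)
      (metis in_keys_iff mult_zero_right)
  moreover have "finite (\<Union>a\<in>keys f. (\<lambda>c. a + c) -` keys F)"
    by (intro finite_UN_I finite_keys finite_vimageI) (auto simp: inj_on_def)
  ultimately show ?thesis
    unfolding contract_def by (subst lookup_Abs_poly_mapping) (auto intro: finite_subset)
qed

lemma lookup_contract_superset:
  assumes "finite A" "keys f \<subseteq> A"
  shows "lookup (contract f F) c = (\<Sum>a\<in>A. lookup f a * lookup F (a + c))"
  unfolding lookup_contract using assms
  by (intro sum.mono_neutral_left) (auto simp: in_keys_iff)

lemma contract_add_left: "contract (f + g) F = contract f F + contract g F"
proof (rule poly_mapping_eqI)
  fix c
  let ?A = "keys f \<union> keys g"
  have "lookup (contract (f + g) F) c = (\<Sum>a\<in>?A. lookup (f + g) a * lookup F (a + c))"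
    using keys_add[of f g] by (intro lookup_contract_superset) auto
  also have "\<dots> = (\<Sum>a\<in>?A. lookup f a * lookup F (a + c)) + (\<Sum>a\<in>?A. lookup g a * lookup F (a + c))"
    by (simp add: lookup_add distrib_right sum.distrib)
  also have "\<dots> = lookup (contract f F) c + lookup (contract g F) c"
    by (subst (1 2) lookup_contract_superset[of ?A]) auto
  finally show "lookup (contract (f + g) F) c = lookup (contract f F + contract g F) c"
    by (simp add: lookup_add)
qed

lemma contract_add_right: "contract f (F + G) = contract f F + contract f G"
  by (rule poly_mapping_eqI) (simp add: lookup_add lookup_contract distrib_left sum.distrib)

lemma contract_zero_left [simp]: "contract 0 F = 0"
  by (rule poly_mapping_eqI) (simp add: lookup_contract)

lemma contract_zero_right [simp]: "contract f 0 = 0"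
  by (rule poly_mapping_eqI) (simp add: lookup_contract)

lemma contract_diff_left: "contract (f - g) F = contract f F - contract g (F::'k::comm_ring_1 mpoly)"
  using contract_add_left[of "f - g" g F] by (simp add: eq_diff_eq)

lemma contract_sum_left: "contract (sum h A) F = (\<Sum>x\<in>A. contract (h x) F)"
  by (induct A rule: infinite_finite_induct) (auto simp: contract_add_left)

lemma contract_sum_right: "contract f (sum H A) = (\<Sum>x\<in>A. contract f (H x))"
  by (induct A rule: infinite_finite_induct) (auto simp: contract_add_right)

lemma lookup_contract_single:
  "lookup (contract (Poly_Mapping.single a v) F) c = v * lookup F (a + c)"
  by (subst lookup_contract_superset[of "{a}"]) (auto simp: lookup_single)

lemma contract_mult: "contract (f * g) F = contract f (contract g F)"
proof -
  let ?mon = "\<lambda>a v. Poly_Mapping.single a v"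
  have single_single: "contract (?mon (a + b) (v * w)) F = contract (?mon a v) (contract (?mon b w) F)"
    for a b v w
    by (rule poly_mapping_eqI) (simp add: lookup_contract_single ac_simps)
  have "f * g = (\<Sum>a\<in>keys f. ?mon a (lookup f a)) * (\<Sum>b\<in>keys g. ?mon b (lookup g b))"
    by (simp only: poly_mapping_sum_singles[symmetric])
  also have "\<dots> = (\<Sum>a\<in>keys f. \<Sum>b\<in>keys g. ?mon (a + b) (lookup f a * lookup g b))"
    by (simp add: sum_distrib_left sum_distrib_right mult_single) (rule sum.swap)
  finally have "contract (f * g) F
      = (\<Sum>a\<in>keys f. \<Sum>b\<in>keys g. contract (?mon a (lookup f a)) (contract (?mon b (lookup g b)) F))"
    by (simp add: contract_sum_left single_single)
  also have "\<dots> = contract (\<Sum>a\<in>keys f. ?mon a (lookup f a)) (contract (\<Sum>b\<in>keys g. ?mon b (lookup g b)) F)"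
    by (simp add: contract_sum_left contract_sum_right) (rule sum.swap)
  also have "\<dots> = contract f (contract g F)"
    by (simp only: poly_mapping_sum_singles[symmetric])
  finally show ?thesis .
qed

lemma contract_commute: "contract f (contract g F) = contract g (contract (f::'k::comm_semiring_1 mpoly) F)"
  by (metis contract_mult mult.commute)

lemma contract_const: "contract (Poly_Mapping.single 0 v) F = Poly_Mapping.single 0 v * F"
proof -
  have "lookup (Poly_Mapping.single 0 v * F) c = v * lookup F c" for c
    by (simp add: mult_map_scale_conv_mult[symmetric] map.rep_eq when_def)
  then show ?thesis
    by (intro poly_mapping_eqI) (simp add: lookup_contract_single)
qed

definition t_free :: "'k::zero mpoly \<Rightarrow> bool" where
  "t_free H \<longleftrightarrow> (\<forall>m\<in>keys H. lookup m 0 = 0)"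

lemma t_free_lookup: "t_free H \<Longrightarrow> lookup m 0 \<noteq> 0 \<Longrightarrow> lookup H m = 0"
  unfolding t_free_def by (metis in_keys_iff)

lemma t_freeI: "(\<And>m. lookup m 0 \<noteq> 0 \<Longrightarrow> lookup H m = 0) \<Longrightarrow> t_free H"
  unfolding t_free_def by (auto simp: in_keys_iff)

lemma monomial_split_t:
  fixes m :: "nat \<Rightarrow>\<^sub>0 nat"
  shows "k \<le> lookup m 0 \<Longrightarrow> m = Poly_Mapping.single 0 k + (m - Poly_Mapping.single 0 k)"
  by (rule poly_mapping_eqI) (auto simp: lookup_add lookup_minus lookup_single when_def)

lemma lookup_tpow_mult:
  fixes q :: "'k::comm_semiring_1 mpoly"
  shows "lookup (tpow k * q) m = (if k \<le> lookup m 0 then lookup q (m - Poly_Mapping.single 0 k) else 0)"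
proof -
  have "Poly_Mapping.single (Poly_Mapping.single 0 k) 1 * q
      = (\<Sum>b\<in>keys q. Poly_Mapping.single (Poly_Mapping.single 0 k + b) (lookup q b))"
    by (subst poly_mapping_sum_singles[of q]) (simp add: sum_distrib_left mult_single)
  moreover have "lookup (\<Sum>b\<in>keys q. Poly_Mapping.single (Poly_Mapping.single 0 k + b) (lookup q b)) m
      = (if k \<le> lookup m 0 then lookup q (m - Poly_Mapping.single 0 k) else 0)"
  proof (cases "k \<le> lookup m 0")
    case True
    define m' where "m' = m - Poly_Mapping.single 0 k"
    have m: "m = Poly_Mapping.single 0 k + m'"
      unfolding m'_def by (rule monomial_split_t[OF True])
    have "(\<Sum>b\<in>keys q. lookup (Poly_Mapping.single (Poly_Mapping.single 0 k + b) (lookup q b)) m)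
        = (\<Sum>b\<in>keys q. if b = m' then lookup q b else 0)"
      by (intro sum.cong) (auto simp: m lookup_single when_def)
    then show ?thesis
      using True by (cases "m' \<in> keys q") (auto simp: lookup_sum m'_def in_keys_iff)
  next
    case False
    then show ?thesis
      by (auto simp: lookup_sum lookup_single when_def lookup_add intro!: sum.neutral)
  qed
  ultimately show ?thesis
    unfolding tpow_def by simp
qed

lemma tpow_mult: "tpow a * tpow b = (tpow (a + b) :: 'k::comm_semiring_1 mpoly)"
  unfolding tpow_def by (simp add: mult_single single_add)

lemma tpow_0 [simp]: "tpow 0 = (1::'k::comm_semiring_1 mpoly)"
  unfolding tpow_def by simp

lemma lookup_contract_tpow: "lookup (contract (tpow k) s) c = lookup s (Poly_Mapping.single 0 k + c)"
  unfolding tpow_def lookup_contract_single by simp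

lemma contract_tpow_tpow_mult:
  assumes "t_free H"
  shows "contract (tpow k) (tpow m * H) = (if k \<le> m then tpow (m - k) * H else 0)"
proof (rule poly_mapping_eqI)
  fix c
  show "lookup (contract (tpow k) (tpow m * H)) c = lookup (if k \<le> m then tpow (m - k) * H else 0) c"
  proof (cases "k \<le> m")
    case True
    have "Poly_Mapping.single 0 k + c - Poly_Mapping.single 0 m = c - Poly_Mapping.single 0 (m - k)"
      if "m \<le> k + lookup c 0"
      using True that by (intro poly_mapping_eqI) (auto simp: lookup_add lookup_minus lookup_single when_def)
    then show ?thesis
      using True by (auto simp: lookup_contract_tpow lookup_tpow_mult lookup_add)
  next
    case False
    have "lookup H (Poly_Mapping.single 0 k + c - Poly_Mapping.single 0 m) = 0"
      using False by (intro t_free_lookup[OF assms]) (auto simp: lookup_add lookup_minus)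
    then show ?thesis
      using False by (auto simp: lookup_contract_tpow lookup_tpow_mult lookup_add)
  qed
qed

lemma contract_t_free_tpow_mult:
  assumes "t_free g"
  shows "contract g (tpow m * H) = tpow m * contract g H"
proof (rule poly_mapping_eqI)
  fix c
  have a0: "lookup a 0 = 0" if "a \<in> keys g" for a
    using assms that unfolding t_free_def by auto
  have "a + c - Poly_Mapping.single 0 m = a + (c - Poly_Mapping.single 0 m)"
    if "a \<in> keys g" "m \<le> lookup c 0" for a
    using a0[OF that(1)] that(2)
    by (intro poly_mapping_eqI) (auto simp: lookup_add lookup_minus lookup_single when_def)
  then show "lookup (contract g (tpow m * H)) c = lookup (tpow m * contract g H) c"
    by (auto simp: lookup_contract lookup_tpow_mult lookup_add a0 intro!: sum.cong)
qed

lemma t_free_contract: "t_free H \<Longrightarrow> t_free (contract f H)"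
  by (rule t_freeI) (simp add: lookup_contract lookup_add t_free_lookup)

lemma lookup_t_to_0: "lookup (t_to_0 s) m = (if lookup m 0 = 0 then lookup s m else 0)"
proof -
  have "finite {m. (if lookup m 0 = 0 then lookup s m else 0) \<noteq> 0}"
    by (rule finite_subset[of _ "keys s"]) (auto simp: in_keys_iff split: if_splits)
  then show ?thesis
    unfolding t_to_0_def by simp
qed

lemma t_to_0_t_free: "t_free s \<Longrightarrow> t_to_0 s = s"
  by (rule poly_mapping_eqI) (auto simp: lookup_t_to_0 t_free_lookup)

lemma t_to_0_add: "t_to_0 (a + b) = t_to_0 a + t_to_0 b"
  by (rule poly_mapping_eqI) (auto simp: lookup_t_to_0 lookup_add)

lemma lookup_tpow_mult_contract_tpow:
  "lookup (tpow k * contract (tpow k) s) m = (if k \<le> lookup m 0 then lookup s m else 0)"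
  by (auto simp: lookup_tpow_mult lookup_contract_tpow monomial_split_t[symmetric])

lemma t_to_0_plus_tpow_contract: "t_to_0 s + tpow 1 * contract (tpow 1) s = (s::'k::comm_ring_1 mpoly)"
  by (rule poly_mapping_eqI) (auto simp: lookup_add lookup_tpow_mult_contract_tpow lookup_t_to_0)

lemma t_to_0_contract_tpow_mult:
  fixes u H :: "'k::comm_ring_1 mpoly"
  assumes "t_free H"
  shows "t_to_0 (contract u (tpow m * H)) = contract (contract (tpow m) u) H"
proof -
  define high where "high = contract (tpow m) u"
  define low where "low = u - tpow m * high"
  have "\<forall>a\<in>keys low. lookup a 0 < m"
    by (auto simp: low_def high_def in_keys_iff lookup_minus lookup_tpow_mult_contract_tpow
        split: if_splits)
  then have "t_to_0 (contract low (tpow m * H)) = 0"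
    by (intro poly_mapping_eqI)
      (auto simp: lookup_t_to_0 lookup_contract lookup_tpow_mult lookup_add intro!: sum.neutral)
  moreover have "contract (tpow m * high) (tpow m * H) = contract high (contract (tpow m) (tpow m * H))"
    by (simp only: contract_mult contract_commute[of "tpow m" high])
  moreover have "contract (tpow m) (tpow m * H) = H"
    by (simp add: contract_tpow_tpow_mult[OF assms])
  moreover have "u = low + tpow m * high"
    by (simp add: low_def)
  ultimately show ?thesis
    unfolding high_def[symmetric] using t_free_contract[OF assms]
    by (simp add: contract_add_left t_to_0_add t_to_0_t_free)
qed

lemma polys_inD: "f \<in> polys_in V \<Longrightarrow> m \<in> keys f \<Longrightarrow> keys m \<subseteq> V"
  unfolding polys_in_def by auto

lemma polys_inI: "(\<And>m. m \<in> keys f \<Longrightarrow> keys m \<subseteq> V) \<Longrightarrow> f \<in> polys_in V"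
  unfolding polys_in_def by auto

lemma polys_in_zero [simp]: "0 \<in> polys_in V"
  by (rule polys_inI) simp

lemma polys_in_add: "f \<in> polys_in V \<Longrightarrow> g \<in> polys_in V \<Longrightarrow> f + g \<in> polys_in V"
  using keys_add[of f g] by (intro polys_inI) (auto dest: polys_inD)

lemma polys_in_diff:
  "f \<in> polys_in V \<Longrightarrow> g \<in> polys_in V \<Longrightarrow> f - (g::'k::ab_group_add mpoly) \<in> polys_in V"
  using keys_diff[of f g] by (intro polys_inI) (auto dest: polys_inD)

lemma polys_in_mult:
  assumes f: "f \<in> polys_in V" and g: "g \<in> polys_in V"
  shows "f * (g::'k::comm_semiring_1 mpoly) \<in> polys_in V"
proof (rule polys_inI)
  fix m assume "m \<in> keys (f * g)"
  then obtain a b where "m = a + b" "a \<in> keys f" "b \<in> keys g"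
    using keys_mult by blast
  then show "keys m \<subseteq> V"
    using polys_inD[OF f] polys_inD[OF g] by (auto simp: keys_add_monomial)
qed

lemma polys_in_sum: "(\<And>x. x \<in> A \<Longrightarrow> h x \<in> polys_in V) \<Longrightarrow> sum h A \<in> polys_in V"
  by (induct A rule: infinite_finite_induct) (auto intro: polys_in_add)

lemma polys_in_single: "keys m \<subseteq> V \<Longrightarrow> Poly_Mapping.single m v \<in> polys_in V"
  by (rule polys_inI) (auto split: if_splits)

lemma polys_in_tpow: "0 \<in> V \<Longrightarrow> tpow k \<in> polys_in V"
  unfolding tpow_def by (rule polys_in_single) simp

lemma polys_in_mono: "f \<in> polys_in V \<Longrightarrow> V \<subseteq> W \<Longrightarrow> f \<in> polys_in W"
  unfolding polys_in_def by blast

lemma polys_in_contract: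
  assumes F: "F \<in> polys_in V"
  shows "contract f F \<in> polys_in V"
proof (rule polys_inI)
  fix c assume "c \<in> keys (contract f F)"
  then have "(\<Sum>a\<in>keys f. lookup f a * lookup F (a + c)) \<noteq> 0"
    by (simp add: in_keys_iff lookup_contract)
  then obtain a where "lookup f a * lookup F (a + c) \<noteq> 0"
    by (rule sum.not_neutral_contains_not_neutral)
  then have "lookup F (a + c) \<noteq> 0"
    by auto
  then have "keys (a + c) \<subseteq> V"
    using polys_inD[OF F] by (simp add: in_keys_iff)
  then show "keys c \<subseteq> V"
    by (auto simp: keys_add_monomial)
qed

lemma subset_atLeastAtMost_Suc_0: "A \<subseteq> {0..r} \<Longrightarrow> 0 \<notin> A \<Longrightarrow> A \<subseteq> {1..r::nat}"
  by (auto simp: subset_iff Suc_le_eq) (metis neq0_conv)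

lemma polys_in_t_to_0:
  assumes "s \<in> polys_in {0..r}"
  shows "t_to_0 s \<in> polys_in {1..r}"
proof (rule polys_inI)
  fix m assume "m \<in> keys (t_to_0 s)"
  then have "m \<in> keys s" "lookup m 0 = 0"
    by (auto simp: in_keys_iff lookup_t_to_0 split: if_splits)
  then show "keys m \<subseteq> {1..r}"
    using polys_inD[OF assms] by (intro subset_atLeastAtMost_Suc_0) (auto simp: in_keys_iff)
qed

lemma Rset_t_free:
  assumes "g \<in> Rset r"
  shows "t_free g"
proof -
  have "0 \<notin> keys m" if "m \<in> keys g" for m
    using polys_inD[OF assms[unfolded Rset_def] that] by auto
  then show ?thesis
    unfolding t_free_def by (simp add: in_keys_iff)
qed

lemma Rset_imp_Sset: "g \<in> Rset r \<Longrightarrow> g \<in> Sset r"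
  unfolding Rset_def Sset_def by (auto elim: polys_in_mono)

lemma ktset_imp_Sset: "a \<in> ktset \<Longrightarrow> a \<in> Sset r"
  unfolding ktset_def Sset_def by (auto elim: polys_in_mono)

lemma tpow_Sset: "tpow k \<in> Sset r"
  unfolding Sset_def by (rule polys_in_tpow) simp

lemma tpow_mult_Sset: "x \<in> Sset r \<Longrightarrow> tpow k * (x::'k::comm_semiring_1 mpoly) \<in> Sset r"
  unfolding Sset_def by (intro polys_in_mult polys_in_tpow) auto

lemma t_to_0_ktset: "a \<in> ktset \<Longrightarrow> t_to_0 a = Poly_Mapping.single 0 (lookup a 0)"
proof (rule poly_mapping_eqI)
  fix m assume a: "a \<in> ktset"
  have "m = 0" if "lookup m 0 = 0" "m \<in> keys a"
    using polys_inD[OF a[unfolded ktset_def] that(2)] that(1)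
    by (intro poly_mapping_eqI) (auto simp: in_keys_iff)
  then show "lookup (t_to_0 a) m = lookup (Poly_Mapping.single 0 (lookup a 0)) m"
    by (auto simp: lookup_t_to_0 lookup_single when_def in_keys_iff)
qed

lemma ideal_sq_mult: "f \<in> I \<Longrightarrow> g \<in> I \<Longrightarrow> f * g \<in> ideal_sq I"
  unfolding ideal_sq_def by (intro CollectI exI[of _ "[f]"] exI[of _ "[g]"]) simp

lemma ideal_sq_induct [consumes 1, case_names zero mult_add]:
  assumes "p \<in> ideal_sq I" "P 0"
    and "\<And>f g q. f \<in> I \<Longrightarrow> g \<in> I \<Longrightarrow> P q \<Longrightarrow> P (f * g + q)"
  shows "P p"
proof -
  have "P (sum_list (map2 (*) fs gs))"
    if "length fs = length gs" "set fs \<subseteq> I" "set gs \<subseteq> I" for fs gs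
    using that
  proof (induction fs arbitrary: gs)
    case (Cons f fs)
    then obtain g gs' where "gs = g # gs'"
      by (cases gs) auto
    then show ?case
      using Cons assms(3) by simp
  qed (simp add: assms(2))
  then show ?thesis
    using assms(1) unfolding ideal_sq_def by blast
qed

section \<open>Macaulay duality\<close>

definition cmult :: "'k::field \<Rightarrow> 'k mpoly \<Rightarrow> 'k mpoly" where
  "cmult c p = Poly_Mapping.single 0 c * p"

interpretation cmult: vector_space "cmult :: 'k::field \<Rightarrow> 'k mpoly \<Rightarrow> 'k mpoly"
  by unfold_locales
    (simp_all add: cmult_def distrib_left distrib_right single_add mult_single mult.assoc[symmetric])

interpretation cmult_pair: vector_space_pair
  "cmult :: 'k::field \<Rightarrow> 'k mpoly \<Rightarrow> 'k mpoly" "cmult :: 'k::field \<Rightarrow> 'k mpoly \<Rightarrow> 'k mpoly"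
  by unfold_locales

lemma lookup_cmult: "lookup (cmult c p) m = c * lookup p m"
  by (simp add: cmult_def mult_map_scale_conv_mult[symmetric] map.rep_eq when_def)

lemma contract_cmult_left: "contract (cmult c h) F = cmult c (contract h (F::'k::field mpoly))"
  by (simp add: cmult_def contract_mult contract_const)

lemma polys_in_cmult: "h \<in> polys_in V \<Longrightarrow> cmult c h \<in> polys_in V"
  unfolding cmult_def by (intro polys_in_mult polys_in_single) simp

lemma subspace_contract_image: "cmult.subspace ((\<lambda>h. contract h (FB::'k::field mpoly)) ` polys_in V)"
proof (rule cmult.subspaceI)
  show "0 \<in> (\<lambda>h. contract h FB) ` polys_in V"
    by (rule image_eqI[of _ _ 0]) auto
  show "x + y \<in> (\<lambda>h. contract h FB) ` polys_in V"
    if "x \<in> (\<lambda>h. contract h FB) ` polys_in V" "y \<in> (\<lambda>h. contract h FB) ` polys_in V" for x y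
    using that by (auto simp: contract_add_left[symmetric] intro!: imageI polys_in_add)
  show "cmult c x \<in> (\<lambda>h. contract h FB) ` polys_in V"
    if "x \<in> (\<lambda>h. contract h FB) ` polys_in V" for c x
    using that by (auto simp: contract_cmult_left[symmetric] intro!: imageI polys_in_cmult)
qed

lemma finite_monomial_divisors: "finite {c::nat \<Rightarrow>\<^sub>0 nat. \<exists>a. a + c = m}"
proof -
  let ?S = "{c::nat \<Rightarrow>\<^sub>0 nat. \<exists>a. a + c = m}"
  let ?f = "\<lambda>c. restrict (lookup c) (keys m)"
  have le: "lookup c i \<le> lookup m i" if "c \<in> ?S" for c i
    using that by (auto simp: lookup_add)
  have "inj_on ?f ?S"
  proof (rule inj_onI)
    fix c d assume c: "c \<in> ?S" and d: "d \<in> ?S" and eq: "?f c = ?f d"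
    show "c = d"
    proof (rule poly_mapping_eqI)
      fix i
      show "lookup c i = lookup d i"
        using fun_cong[OF eq, of i] le[OF c, of i] le[OF d, of i]
        by (cases "i \<in> keys m") (auto simp: in_keys_iff)
    qed
  qed
  moreover have "?f ` ?S \<subseteq> PiE (keys m) (\<lambda>i. {..lookup m i})"
    using le by auto
  ultimately show ?thesis
    by (meson finite_PiE finite_atMost finite_imageD finite_keys finite_subset)
qed

lemma linear_functional_is_contraction:
  fixes L :: "'k::field mpoly \<Rightarrow> 'k mpoly"
  assumes D: "finite D" and L: "Vector_Spaces.linear cmult cmult L"
  obtains f where "keys f \<subseteq> D"
    and "\<And>v. keys v \<subseteq> D \<Longrightarrow> lookup (contract f v) 0 = lookup (L v) 0"
proof
  define f where "f = (\<Sum>a\<in>D. Poly_Mapping.single a (lookup (L (Poly_Mapping.single a 1)) 0))"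
  have lookup_f: "lookup f a = (if a \<in> D then lookup (L (Poly_Mapping.single a 1)) 0 else 0)" for a
    unfolding f_def by (simp add: lookup_sum lookup_single when_def D)
  show keys_f: "keys f \<subseteq> D"
    by (auto simp: in_keys_iff lookup_f split: if_splits)
  fix v :: "'k mpoly" assume v: "keys v \<subseteq> D"
  have "v = (\<Sum>a\<in>D. cmult (lookup v a) (Poly_Mapping.single a 1))"
  proof (rule poly_mapping_eqI)
    fix m
    show "lookup v m = lookup (\<Sum>a\<in>D. cmult (lookup v a) (Poly_Mapping.single a 1)) m"
      using v D by (auto simp: lookup_sum lookup_cmult lookup_single when_def in_keys_iff if_distrib
          cong: if_cong)
  qed
  then have "L v = (\<Sum>a\<in>D. cmult (lookup v a) (L (Poly_Mapping.single a 1)))"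
    by (metis (no_types, lifting) cmult_pair.linear_sum[OF L] cmult_pair.linear_scale[OF L] sum.cong)
  then have "lookup (L v) 0 = (\<Sum>a\<in>D. lookup v a * lookup (L (Poly_Mapping.single a 1)) 0)"
    by (simp add: lookup_sum lookup_cmult)
  also have "\<dots> = lookup (contract f v) 0"
    by (simp add: lookup_contract_superset[OF D keys_f] lookup_f mult.commute)
  finally show "lookup (contract f v) 0 = lookup (L v) 0" ..
qed

lemma linear_functional_vanishing_on_subspace:
  assumes W: "cmult.subspace W" and v: "v \<notin> W"
  obtains L :: "'k::field mpoly \<Rightarrow> 'k mpoly"
  where "Vector_Spaces.linear cmult cmult L" "\<And>w. w \<in> W \<Longrightarrow> L w = 0" "L v = 1"
proof -
  obtain BW where BW: "BW \<subseteq> W" "cmult.independent BW" "W \<subseteq> cmult.span BW"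
    by (rule cmult.basis_exists)
  have v_span: "v \<notin> cmult.span BW"
    using cmult.span_minimal[OF BW(1) W] v by blast
  have ind: "cmult.independent (insert v BW)"
    by (rule cmult.independent_insertI[OF v_span BW(2)])
  define L where "L = cmult_pair.construct (insert v BW) (\<lambda>x. if x = v then 1 else 0)"
  have lin: "Vector_Spaces.linear cmult cmult L"
    unfolding L_def by (rule cmult_pair.linear_construct[OF ind])
  have "L b = 0" if "b \<in> BW" for b
  proof -
    have "b \<noteq> v"
      using that v_span cmult.span_base by blast
    then show ?thesis
      unfolding L_def using cmult_pair.construct_basis[OF ind, of b] that by simp
  qed
  then have "L w = 0" if "w \<in> W" for w
    using cmult_pair.linear_eq_0_on_span[OF lin] BW(3) that by blast
  moreover have "L v = 1"
    unfolding L_def using cmult_pair.construct_basis[OF ind, of v] by simp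
  ultimately show ?thesis
    using lin that by blast
qed

lemma contract_single_in_contract_image:
  assumes F: "F \<in> polys_in V"
  shows "contract (Poly_Mapping.single c v) F \<in> (\<lambda>h. contract h F) ` polys_in V"
proof (cases "keys c \<subseteq> V")
  case True
  then show ?thesis
    by (intro imageI polys_in_single)
next
  case False
  then have "lookup F (a + c) = 0" for a
    using polys_inD[OF F, of "a + c"] by (auto simp: in_keys_iff keys_add_monomial)
  then have "contract (Poly_Mapping.single c v) F = contract 0 F"
    by (intro poly_mapping_eqI) (simp add: lookup_contract_single add.commute)
  then show ?thesis
    by (metis image_eqI polys_in_zero)
qed

text \<open>Separate \<open>\<Phi>\<close> from \<open>R \<circ> F\<^sub>B\<close> by a functional \<open>L\<close>, realised as contraction with some
  \<open>f\<close> on the finitely many relevant monomials: then \<open>f\<close> kills every \<open>x\<^sup>c \<circ> F\<^sub>B\<close>, hence \<open>F\<^sub>B\<close>,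
  but not \<open>\<Phi>\<close>.\<close>

lemma macaulay_duality:
  fixes FB Phi :: "'k::field mpoly"
  assumes FB: "FB \<in> Rset r" and Phi: "Phi \<in> Rset r"
    and perp: "\<And>f. f \<in> Ann {1..r} FB \<Longrightarrow> contract f Phi = 0"
  shows "\<exists>h\<in>Rset r. contract h FB = Phi"
proof (rule ccontr)
  define W where "W = (\<lambda>h. contract h FB) ` Rset r"
  assume "\<not> (\<exists>h\<in>Rset r. contract h FB = Phi)"
  then have "Phi \<notin> W"
    unfolding W_def by blast
  moreover have "cmult.subspace W"
    unfolding W_def Rset_def by (rule subspace_contract_image)
  ultimately obtain L :: "'k mpoly \<Rightarrow> 'k mpoly"
    where L: "Vector_Spaces.linear cmult cmult L" "\<And>w. w \<in> W \<Longrightarrow> L w = 0" "L Phi = 1"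
    using linear_functional_vanishing_on_subspace by blast
  define D where "D = (\<Union>m\<in>keys FB. {c. \<exists>a. a + c = m}) \<union> keys Phi"
  have "finite D"
    unfolding D_def using finite_monomial_divisors by auto
  then obtain f where keys_f: "keys f \<subseteq> D"
    and f: "\<And>v. keys v \<subseteq> D \<Longrightarrow> lookup (contract f v) 0 = lookup (L v) 0"
    using linear_functional_is_contraction[OF _ L(1)] by blast
  have "keys c \<subseteq> {1..r}" if "c \<in> D" for c
  proof -
    have "(\<exists>a. a + c \<in> keys FB) \<or> c \<in> keys Phi"
      using that unfolding D_def by blast
    then show ?thesis
      using polys_inD[OF FB[unfolded Rset_def]] polys_inD[OF Phi[unfolded Rset_def]]
      by (metis keys_add_monomial le_sup_iff)
  qed
  then have f_R: "f \<in> Rset r"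
    unfolding Rset_def using keys_f by (intro polys_inI) blast
  have "contract f FB = 0"
  proof (rule poly_mapping_eqI)
    fix c
    define w where "w = contract (Poly_Mapping.single c 1) FB"
    have lookup_w: "lookup w a = lookup FB (a + c)" for a
      by (simp add: w_def lookup_contract_single add.commute)
    have "keys w \<subseteq> D"
    proof
      fix x assume "x \<in> keys w"
      then have "c + x \<in> keys FB"
        by (simp add: in_keys_iff lookup_w add.commute)
      then show "x \<in> D"
        unfolding D_def by (intro UnI1 UN_I[of "c + x"]) auto
    qed
    moreover have "w \<in> W"
      unfolding W_def w_def Rset_def using FB unfolding Rset_def
      by (rule contract_single_in_contract_image)
    moreover have "lookup (contract f FB) c = lookup (contract f w) 0"
      unfolding w_def contract_commute[of f] by (simp add: lookup_contract_single)
    ultimately show "lookup (contract f FB) c = lookup 0 c"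
      using f L(2) by simp
  qed
  with f_R have "contract f Phi = 0"
    using perp unfolding Ann_def Rset_def by blast
  then have "lookup (L Phi) 0 = 0"
    using f[of Phi] unfolding D_def by simp
  then show False
    using L(3) by simp
qed

definition quotient_basis :: "nat \<Rightarrow> 'k::field mpoly set \<Rightarrow> 'k mpoly set \<Rightarrow> bool" where
  "quotient_basis r I Bs \<longleftrightarrow> Bs \<subseteq> Rset r
     \<and> (\<forall>g\<in>Rset r. \<exists>B0 c. finite B0 \<and> B0 \<subseteq> Bs \<and> g - (\<Sum>b\<in>B0. cmult (c b) b) \<in> I)
     \<and> (\<forall>B0 c. finite B0 \<and> B0 \<subseteq> Bs \<and> (\<Sum>b\<in>B0. cmult (c b) b) \<in> I \<longrightarrow> (\<forall>b\<in>B0. c b = 0))"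

text \<open>\<open>R/Ann(F\<^sub>B) \<cong> R \<circ> F\<^sub>B\<close>: preimages of a basis of \<open>R \<circ> F\<^sub>B\<close> will do.\<close>

lemma quotient_basis_Ann_exists:
  fixes FB :: "'k::field mpoly"
  shows "\<exists>Bs. quotient_basis r (Ann {1..r} FB) Bs"
proof -
  define W where "W = (\<lambda>h. contract h FB) ` Rset r"
  obtain BW where BW: "BW \<subseteq> W" "cmult.independent BW" "W \<subseteq> cmult.span BW"
    by (rule cmult.basis_exists)
  define pre where "pre w = (SOME h. h \<in> Rset r \<and> contract h FB = w)" for w
  have pre: "pre w \<in> Rset r" "contract (pre w) FB = w" if "w \<in> BW" for w
    using someI_ex[of "\<lambda>h. h \<in> Rset r \<and> contract h FB = w"] that BW(1)
    unfolding pre_def W_def by blast+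
  have inj_pre: "inj_on pre BW"
    by (rule inj_onI) (metis pre(2))
  have Ann_iff: "x \<in> Ann {1..r} FB \<longleftrightarrow> x \<in> Rset r \<and> contract x FB = 0" for x
    unfolding Ann_def Rset_def by auto
  have combination_pre: "(\<Sum>b\<in>pre ` T. cmult (c b) b) \<in> Rset r
      \<and> contract (\<Sum>b\<in>pre ` T. cmult (c b) b) FB = (\<Sum>w\<in>T. cmult (c (pre w)) w)"
    if "T \<subseteq> BW" for T c
    using that pre inj_on_subset[OF inj_pre that] unfolding Rset_def
    by (auto simp: sum.reindex contract_sum_left contract_cmult_left
        intro!: polys_in_sum polys_in_cmult sum.cong)
  have "\<forall>g\<in>Rset r. \<exists>B0 c. finite B0 \<and> B0 \<subseteq> pre ` BW
      \<and> g - (\<Sum>b\<in>B0. cmult (c b) b) \<in> Ann {1..r} FB"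
  proof
    fix g :: "'k mpoly" assume g: "g \<in> Rset r"
    have "contract g FB \<in> cmult.span BW"
      using g BW(3) unfolding W_def by blast
    then obtain T u where T: "finite T" "T \<subseteq> BW" "contract g FB = (\<Sum>w\<in>T. cmult (u w) w)"
      unfolding cmult.span_explicit by blast
    define c where "c b = u (inv_into T pre b)" for b
    have "c (pre w) = u w" if "w \<in> T" for w
      unfolding c_def using inv_into_f_f[OF inj_on_subset[OF inj_pre T(2)] that] by simp
    then have "g - (\<Sum>b\<in>pre ` T. cmult (c b) b) \<in> Ann {1..r} FB"
      unfolding Ann_iff using g combination_pre[OF T(2), of c] T(3)
      by (simp add: contract_diff_left Rset_def polys_in_diff)
    then show "\<exists>B0 c. finite B0 \<and> B0 \<subseteq> pre ` BW \<and> g - (\<Sum>b\<in>B0. cmult (c b) b) \<in> Ann {1..r} FB"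
      using T by blast
  qed
  moreover have "\<forall>B0 c. finite B0 \<and> B0 \<subseteq> pre ` BW \<and> (\<Sum>b\<in>B0. cmult (c b) b) \<in> Ann {1..r} FB
      \<longrightarrow> (\<forall>b\<in>B0. c b = 0)"
  proof (intro allI impI, elim conjE)
    fix B0 and c :: "'k mpoly \<Rightarrow> 'k"
    assume that: "finite B0" "B0 \<subseteq> pre ` BW" "(\<Sum>b\<in>B0. cmult (c b) b) \<in> Ann {1..r} FB"
    define T where "T = {w\<in>BW. pre w \<in> B0}"
    have T: "T \<subseteq> BW" "pre ` T = B0"
      using that(2) by (auto simp: T_def)
    have fin: "finite T"
      using finite_imageD[OF _ inj_on_subset[OF inj_pre T(1)]] that(1) T(2) by simp
    have zero: "(\<Sum>w\<in>T. cmult (c (pre w)) w) = 0"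
      using combination_pre[OF T(1), of c] that(3) T(2) Ann_iff by simp
    have "c (pre w) = 0" if "w \<in> T" for w
      using cmult.independentD[OF BW(2) fin T(1) zero that] .
    then show "\<forall>b\<in>B0. c b = 0"
      using T(2) by blast
  qed
  moreover have "pre ` BW \<subseteq> Rset r"
    using pre by blast
  ultimately show ?thesis
    unfolding quotient_basis_def by (intro exI[of _ "pre ` BW"] conjI)
qed

definition kt_combinations :: "'k::field mpoly set \<Rightarrow> 'k mpoly set" where
  "kt_combinations Bs = {\<Sum>b\<in>B0. a b * b | B0 a. finite B0 \<and> B0 \<subseteq> Bs \<and> (\<forall>b\<in>B0. a b \<in> ktset)}"

lemma zero_in_kt_combinations: "0 \<in> kt_combinations Bs"
  unfolding kt_combinations_def by (intro CollectI exI[of _ "{}"]) auto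

lemma kt_combinations_add:
  assumes "x \<in> kt_combinations Bs" "y \<in> kt_combinations Bs"
  shows "x + y \<in> kt_combinations Bs"
proof -
  obtain B1 a1 where 1: "finite B1" "B1 \<subseteq> Bs" "\<forall>b\<in>B1. a1 b \<in> ktset" "x = (\<Sum>b\<in>B1. a1 b * b)"
    using assms(1) unfolding kt_combinations_def by blast
  obtain B2 a2 where 2: "finite B2" "B2 \<subseteq> Bs" "\<forall>b\<in>B2. a2 b \<in> ktset" "y = (\<Sum>b\<in>B2. a2 b * b)"
    using assms(2) unfolding kt_combinations_def by blast
  define a where "a b = (if b \<in> B1 then a1 b else 0) + (if b \<in> B2 then a2 b else 0)" for b
  have "(\<Sum>b\<in>B1 \<union> B2. (if b \<in> B1 then a1 b else 0) * b) = x"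
    "(\<Sum>b\<in>B1 \<union> B2. (if b \<in> B2 then a2 b else 0) * b) = y"
    using 1 2 by (auto intro: sum.mono_neutral_cong_right)
  then have "x + y = (\<Sum>b\<in>B1 \<union> B2. a b * b)"
    unfolding a_def distrib_right sum.distrib by simp
  moreover have "a b \<in> ktset" for b
    unfolding a_def ktset_def using 1(3) 2(3) by (auto simp: ktset_def intro: polys_in_add)
  ultimately show ?thesis
    unfolding kt_combinations_def using 1 2 by blast
qed

lemma tpow_mult_cmult_combination_in_kt_combinations:
  fixes Bs :: "'k::field mpoly set"
  assumes "finite B0" "B0 \<subseteq> Bs"
  shows "tpow k * (\<Sum>b\<in>B0. cmult (c b) b) \<in> kt_combinations Bs"
proof -
  have "tpow k * (\<Sum>b\<in>B0. cmult (c b) b) = (\<Sum>b\<in>B0. (tpow k * Poly_Mapping.single 0 (c b)) * b)"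
    by (simp add: cmult_def sum_distrib_left mult.assoc)
  moreover have "tpow k * Poly_Mapping.single 0 v \<in> ktset" for v :: 'k
    unfolding ktset_def by (intro polys_in_mult polys_in_tpow polys_in_single) auto
  ultimately show ?thesis
    unfolding kt_combinations_def using assms
    by (intro CollectI exI[of _ B0] exI[of _ "\<lambda>b. tpow k * Poly_Mapping.single 0 (c b)"]) auto
qed

section \<open>The algebra \<open>C = S/Ann(T\<^bsup>[n-1]\<^esup> F\<^sub>B + G)\<close>\<close>

locale free_extension_setting =
  fixes r n :: nat and FB G :: "'k::field mpoly"
  assumes n: "n \<ge> 2" and FB: "FB \<in> Rset r" and G: "G \<in> Rset r"
begin

definition "F = tpow (n - 1) * FB + G"
definition "J = Ann {0..r} F"
definition "IB = Ann {1..r} FB"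

lemma J_iff: "j \<in> J \<longleftrightarrow> j \<in> Sset r \<and> contract j F = 0"
  unfolding J_def Ann_def Sset_def by auto

lemma IB_iff: "e \<in> IB \<longleftrightarrow> e \<in> Rset r \<and> contract e FB = 0"
  unfolding IB_def Ann_def Rset_def by auto

lemma contract_tpow_F:
  "k \<ge> 1 \<Longrightarrow> contract (tpow k) F = (if k \<le> n - 1 then tpow (n - 1 - k) * FB else 0)"
  using contract_tpow_tpow_mult[OF Rset_t_free[OF G], of k 0]
  by (simp add: F_def contract_add_right contract_tpow_tpow_mult[OF Rset_t_free[OF FB]])

lemma contract_Rset_F: "g \<in> Rset r \<Longrightarrow> contract g F = tpow (n - 1) * contract g FB + contract g G"
  by (simp add: F_def contract_add_right contract_t_free_tpow_mult Rset_t_free)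

lemma mult_mem_J: "j \<in> J \<Longrightarrow> x \<in> Sset r \<Longrightarrow> x * j \<in> J"
  by (auto simp: J_iff Sset_def polys_in_mult contract_mult)

lemma add_mem_J: "a \<in> J \<Longrightarrow> b \<in> J \<Longrightarrow> a + b \<in> J"
  by (auto simp: J_iff Sset_def polys_in_add contract_add_left)

lemma diff_mem_J: "a \<in> J \<Longrightarrow> b \<in> J \<Longrightarrow> a - b \<in> J"
  by (auto simp: J_iff Sset_def polys_in_diff contract_diff_left)

lemma contract_tpow_mult_F: "contract (tpow k * x) F = contract x (contract (tpow k) F)"
  by (simp add: contract_mult contract_commute)

lemma tpow_n_mult_mem_J: "x \<in> Sset r \<Longrightarrow> tpow n * x \<in> J"
proof -
  have "contract (tpow n) F = 0"
    using n by (subst contract_tpow_F) auto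
  then show "x \<in> Sset r \<Longrightarrow> tpow n * x \<in> J"
    by (simp add: J_iff tpow_mult_Sset contract_tpow_mult_F)
qed

lemma tpow_mult_mem_J:
  assumes e: "e \<in> IB" and k: "k \<ge> 1"
  shows "tpow k * e \<in> J"
proof -
  have eR: "e \<in> Rset r" "contract e FB = 0"
    using e by (simp_all add: IB_iff)
  then have "contract (tpow k * e) F = 0"
    using k by (simp add: contract_tpow_mult_F contract_tpow_F contract_t_free_tpow_mult Rset_t_free)
  then show ?thesis
    using eR by (simp add: J_iff tpow_mult_Sset Rset_imp_Sset)
qed

lemma tpow_pred_mult_mem_J_iff:
  assumes "g \<in> Rset r"
  shows "tpow (n - 1) * g \<in> J \<longleftrightarrow> g \<in> IB"
proof -
  have "contract (tpow (n - 1) * g) F = contract g FB"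
    using n by (simp add: contract_tpow_mult_F contract_tpow_F)
  then show ?thesis
    using assms by (simp add: J_iff IB_iff tpow_mult_Sset Rset_imp_Sset)
qed

text \<open>Since \<open>t\<^sup>n \<in> J\<close>, \<open>t\<^bsup>n-1\<^esup> (g + t x) \<equiv> t\<^bsup>n-1\<^esup> g\<close> modulo \<open>J\<close>.\<close>

lemma mem_IB_if_tpow_pred_mult_mem_J:
  assumes g: "g \<in> Rset r" and x: "x \<in> Sset r" and J: "tpow (n - 1) * (g + tpow 1 * x) \<in> J"
  shows "g \<in> IB"
proof -
  have "tpow (n - 1) * (g + tpow 1 * x) = tpow (n - 1) * g + tpow n * x"
    using n by (simp add: distrib_left mult.assoc[symmetric] tpow_mult)
  then have "tpow (n - 1) * g \<in> J"
    using diff_mem_J[OF J tpow_n_mult_mem_J[OF x]] by simp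
  then show ?thesis
    using tpow_pred_mult_mem_J_iff[OF g] by simp
qed

lemma diff_tpow_pred_mult_mem_J:
  assumes e: "e \<in> IB" and h: "h \<in> Rset r" and eq: "contract e G = contract h FB"
  shows "e - tpow (n - 1) * h \<in> J"
proof -
  have "contract (tpow (n - 1) * h) F = contract h FB"
    using n by (simp add: contract_tpow_mult_F contract_tpow_F)
  moreover have "contract e F = contract e G"
    using e by (simp add: IB_iff contract_Rset_F)
  moreover have "e - tpow (n - 1) * h \<in> Sset r"
    using e h Rset_imp_Sset unfolding IB_iff Sset_def
    by (auto intro!: polys_in_diff tpow_mult_Sset[unfolded Sset_def])
  ultimately show ?thesis
    using eq by (simp add: J_iff contract_diff_left)
qed

lemma t_to_0_mem_IB:
  assumes s: "s \<in> Sset r" and u: "u \<in> Sset r" and J: "s - tpow 1 * u \<in> J"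
  shows "t_to_0 s \<in> IB"
proof (rule mem_IB_if_tpow_pred_mult_mem_J)
  show "t_to_0 s \<in> Rset r"
    using s unfolding Sset_def Rset_def by (rule polys_in_t_to_0)
  show "contract (tpow 1) s - u \<in> Sset r"
    using s u unfolding Sset_def by (intro polys_in_diff polys_in_contract)
  have "s - tpow 1 * u = t_to_0 s + tpow 1 * (contract (tpow 1) s - u)"
    by (subst (1) t_to_0_plus_tpow_contract[symmetric]) (simp add: algebra_simps)
  then show "tpow (n - 1) * (t_to_0 s + tpow 1 * (contract (tpow 1) s - u)) \<in> J"
    using mult_mem_J[OF J tpow_Sset] by simp
qed

lemma contract_G_eq_if_mem_J:
  assumes e: "e \<in> IB" and J: "e - tpow 1 * u \<in> J"
  shows "contract e G = contract (contract (tpow (n - 2)) u) FB"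
proof -
  have "contract e F = contract e G"
    using e by (simp add: IB_iff contract_Rset_F)
  moreover have "contract (tpow 1 * u) F = contract u (tpow (n - 2) * FB)"
    using n by (subst contract_tpow_mult_F, subst contract_tpow_F) (auto simp: numeral_2_eq_2)
  ultimately have "contract e G = contract u (tpow (n - 2) * FB)"
    using J by (simp add: J_iff contract_diff_left)
  then have "contract e G = t_to_0 (contract u (tpow (n - 2) * FB))"
    using t_to_0_t_free[OF t_free_contract[OF Rset_t_free[OF G]]] by metis
  then show ?thesis
    by (simp add: t_to_0_contract_tpow_mult Rset_t_free[OF FB])
qed

lemma ideal_sq_contract_G_eq_0:
  assumes lift: "\<And>e. e \<in> IB \<Longrightarrow> \<exists>h. contract e G = contract h FB"
  shows "\<forall>p\<in>ideal_sq IB. contract p G = 0"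
proof
  fix p assume "p \<in> ideal_sq IB"
  then show "contract p G = 0"
  proof (induction rule: ideal_sq_induct)
    case (mult_add f g q)
    obtain h where "contract g G = contract h FB"
      using lift[OF mult_add.hyps(2)] by blast
    then have "contract (f * g) G = contract h (contract f FB)"
      by (simp add: contract_mult contract_commute)
    then show ?case
      using mult_add by (simp add: IB_iff contract_add_left)
  qed simp
qed

lemma contract_G_in_contract_image:
  assumes sq: "\<forall>p\<in>ideal_sq IB. contract p G = 0" and e: "e \<in> IB"
  shows "\<exists>h\<in>Rset r. contract e G = contract h FB"
proof -
  have "contract e G \<in> Rset r"
    using G unfolding Rset_def by (rule polys_in_contract)
  moreover have "contract f (contract e G) = 0" if "f \<in> Ann {1..r} FB" for f
    using sq ideal_sq_mult[OF that[folded IB_def] e] by (simp add: contract_mult[symmetric])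
  ultimately show ?thesis
    using macaulay_duality[OF FB] by metis
qed

lemma mem_tC_if_t_to_0_mem_IB:
  assumes lift: "\<And>e. e \<in> IB \<Longrightarrow> \<exists>h\<in>Rset r. contract e G = contract h FB"
    and s: "s \<in> Sset r" and s0: "t_to_0 s \<in> IB"
  shows "\<exists>u\<in>Sset r. s - tpow 1 * u \<in> J"
proof -
  obtain h where h: "h \<in> Rset r" "contract (t_to_0 s) G = contract h FB"
    using lift[OF s0] by blast
  define u where "u = contract (tpow 1) s + tpow (n - 2) * h"
  have "u \<in> Sset r"
    using s tpow_mult_Sset[OF Rset_imp_Sset[OF h(1)]] unfolding u_def Sset_def
    by (intro polys_in_add polys_in_contract)
  moreover have "tpow 1 * tpow (n - 2) = (tpow (n - 1) :: 'k mpoly)"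
    using n by (simp add: tpow_mult numeral_2_eq_2 Suc_diff_Suc)
  then have "s - tpow 1 * u = t_to_0 s - tpow (n - 1) * h"
    unfolding u_def
    by (subst (1) t_to_0_plus_tpow_contract[symmetric]) (simp add: algebra_simps mult.assoc[symmetric])
  ultimately show ?thesis
    using diff_tpow_pred_mult_mem_J[OF s0 h] by (intro bexI[of _ u]) simp_all
qed

definition kt_span_mod_J :: "'k mpoly set \<Rightarrow> 'k mpoly set" where
  "kt_span_mod_J Bs = {s. \<exists>c\<in>kt_combinations Bs. s - c \<in> J}"

lemma zero_mem_J: "0 \<in> J"
  by (simp add: J_iff Sset_def)

lemma J_subset_kt_span_mod_J: "j \<in> J \<Longrightarrow> j \<in> kt_span_mod_J Bs"
  unfolding kt_span_mod_J_def by (auto intro!: bexI[OF _ zero_in_kt_combinations])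

lemma kt_combinations_subset_kt_span_mod_J: "c \<in> kt_combinations Bs \<Longrightarrow> c \<in> kt_span_mod_J Bs"
  unfolding kt_span_mod_J_def using zero_mem_J by force

lemma kt_span_mod_J_add:
  assumes "x \<in> kt_span_mod_J Bs" "y \<in> kt_span_mod_J Bs"
  shows "x + y \<in> kt_span_mod_J Bs"
proof -
  obtain c d where c: "c \<in> kt_combinations Bs" "x - c \<in> J" and d: "d \<in> kt_combinations Bs" "y - d \<in> J"
    using assms unfolding kt_span_mod_J_def by blast
  have eq: "x + y - (c + d) = (x - c) + (y - d)"
    by simp
  have "x + y - (c + d) \<in> J"
    by (subst eq) (rule add_mem_J[OF c(2) d(2)])
  then show ?thesis
    unfolding kt_span_mod_J_def using kt_combinations_add[OF c(1) d(1)] by blast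
qed

lemma kt_span_mod_J_sum:
  "(\<And>x. x \<in> A \<Longrightarrow> h x \<in> kt_span_mod_J Bs) \<Longrightarrow> sum h A \<in> kt_span_mod_J Bs"
  by (induction A rule: infinite_finite_induct)
    (auto intro: kt_span_mod_J_add J_subset_kt_span_mod_J zero_mem_J)

context
  fixes Bs assumes Bs: "quotient_basis r IB Bs"
begin

lemma tpow_mult_in_kt_span_mod_J:
  assumes g: "g \<in> Rset r" and k: "k \<ge> 1"
  shows "tpow k * g \<in> kt_span_mod_J Bs"
proof -
  obtain B0 c where B0: "finite B0" "B0 \<subseteq> Bs" "g - (\<Sum>b\<in>B0. cmult (c b) b) \<in> IB"
    using Bs g unfolding quotient_basis_def by blast
  have "tpow k * g - tpow k * (\<Sum>b\<in>B0. cmult (c b) b) = tpow k * (g - (\<Sum>b\<in>B0. cmult (c b) b))"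
    by (simp add: right_diff_distrib)
  also have "\<dots> \<in> J"
    using tpow_mult_mem_J[OF B0(3) k] .
  finally show ?thesis
    unfolding kt_span_mod_J_def
    using tpow_mult_cmult_combination_in_kt_combinations[OF B0(1,2)] by blast
qed

lemma Rset_subset_kt_span_mod_J:
  assumes lift: "\<And>e. e \<in> IB \<Longrightarrow> \<exists>h\<in>Rset r. contract e G = contract h FB"
    and g: "g \<in> Rset r"
  shows "g \<in> kt_span_mod_J Bs"
proof -
  obtain B0 c where B0: "finite B0" "B0 \<subseteq> Bs" "g - (\<Sum>b\<in>B0. cmult (c b) b) \<in> IB"
    using Bs g unfolding quotient_basis_def by blast
  define e where "e = g - (\<Sum>b\<in>B0. cmult (c b) b)"
  obtain h where h: "h \<in> Rset r" "contract e G = contract h FB"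
    using lift B0(3) unfolding e_def by blast
  have "(\<Sum>b\<in>B0. cmult (c b) b) \<in> kt_span_mod_J Bs"
    using kt_combinations_subset_kt_span_mod_J
      tpow_mult_cmult_combination_in_kt_combinations[OF B0(1,2), of 0] by simp
  moreover have "e - tpow (n - 1) * h \<in> kt_span_mod_J Bs"
    using J_subset_kt_span_mod_J diff_tpow_pred_mult_mem_J[OF B0(3)[folded e_def] h] by blast
  moreover have "tpow (n - 1) * h \<in> kt_span_mod_J Bs"
    using tpow_mult_in_kt_span_mod_J[OF h(1)] n by simp
  ultimately have "(\<Sum>b\<in>B0. cmult (c b) b) + (e - tpow (n - 1) * h) + tpow (n - 1) * h
      \<in> kt_span_mod_J Bs"
    by (intro kt_span_mod_J_add)
  moreover have "(\<Sum>b\<in>B0. cmult (c b) b) + (e - tpow (n - 1) * h) + tpow (n - 1) * h = g"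
    by (simp add: e_def)
  ultimately show ?thesis
    by simp
qed

lemma Sset_subset_kt_span_mod_J:
  assumes lift: "\<And>e. e \<in> IB \<Longrightarrow> \<exists>h\<in>Rset r. contract e G = contract h FB"
    and s: "s \<in> Sset r"
  shows "s \<in> kt_span_mod_J Bs"
proof -
  have "Poly_Mapping.single m v \<in> kt_span_mod_J Bs" if m: "keys m \<subseteq> {0..r}" for m v
  proof -
    define k where "k = lookup m 0"
    define m' where "m' = m - Poly_Mapping.single 0 k"
    have mm: "m = Poly_Mapping.single 0 k + m'"
      unfolding m'_def k_def by (rule monomial_split_t) simp
    have "keys m' \<subseteq> keys m"
      by (subst mm) (simp add: keys_add_monomial)
    moreover have "0 \<notin> keys m'"
      by (simp add: m'_def k_def lookup_minus in_keys_iff)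
    ultimately have "Poly_Mapping.single m' v \<in> Rset r"
      unfolding Rset_def using m by (intro polys_in_single subset_atLeastAtMost_Suc_0) auto
    moreover have "Poly_Mapping.single m v = tpow k * Poly_Mapping.single m' v"
      by (subst mm) (simp add: tpow_def mult_single)
    ultimately show ?thesis
      using Rset_subset_kt_span_mod_J[OF lift] tpow_mult_in_kt_span_mod_J
      by (cases "k = 0") auto
  qed
  then have "(\<Sum>m\<in>keys s. Poly_Mapping.single m (lookup s m)) \<in> kt_span_mod_J Bs"
    using s unfolding Sset_def by (intro kt_span_mod_J_sum) (auto dest: polys_inD)
  then show ?thesis
    using poly_mapping_sum_singles[of s] by simp
qed

lemma kt_combination_coeffs_divisible_by_t:
  assumes B0: "finite B0" "B0 \<subseteq> Bs" and a: "\<forall>b\<in>B0. a b \<in> ktset"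
    and m: "m < n" and J: "tpow m * (\<Sum>b\<in>B0. a b * b) \<in> J"
  shows "\<forall>b\<in>B0. a b = tpow 1 * contract (tpow 1) (a b)"
proof -
  define c where "c b = lookup (a b) 0" for b
  define a' where "a' b = contract (tpow 1) (a b)" for b
  have a_split: "a b = Poly_Mapping.single 0 (c b) + tpow 1 * a' b" if "b \<in> B0" for b
    using t_to_0_plus_tpow_contract[of "a b"] t_to_0_ktset[of "a b"] a that
    by (simp add: c_def a'_def)
  define S0 where "S0 = (\<Sum>b\<in>B0. cmult (c b) b)"
  define S1 where "S1 = (\<Sum>b\<in>B0. a' b * b)"
  have BsR: "b \<in> Rset r" if "b \<in> B0" for b
    using Bs B0(2) that unfolding quotient_basis_def by blast
  have "(\<Sum>b\<in>B0. a b * b) = S0 + tpow 1 * S1"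
    unfolding S0_def S1_def cmult_def
    by (simp add: a_split distrib_right sum.distrib sum_distrib_left mult.assoc cong: sum.cong)
  moreover have "tpow (n - 1) * (\<Sum>b\<in>B0. a b * b) \<in> J"
    using mult_mem_J[OF J tpow_Sset, of "n - 1 - m"] m
    by (simp add: mult.assoc[symmetric] tpow_mult)
  moreover have "S0 \<in> Rset r"
    unfolding S0_def Rset_def using BsR by (intro polys_in_sum polys_in_cmult) (simp add: Rset_def)
  moreover have "a' b * b \<in> Sset r" if "b \<in> B0" for b
  proof -
    have "a' b \<in> ktset"
      using a that unfolding a'_def ktset_def by (blast intro: polys_in_contract)
    then show ?thesis
      using ktset_imp_Sset Rset_imp_Sset BsR[OF that] unfolding Sset_def by (blast intro: polys_in_mult)
  qed
  then have "S1 \<in> Sset r"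
    unfolding S1_def Sset_def by (intro polys_in_sum) (simp add: Sset_def)
  ultimately have "S0 \<in> IB"
    using mem_IB_if_tpow_pred_mult_mem_J by simp
  then have "\<forall>b\<in>B0. c b = 0"
    using Bs B0 unfolding quotient_basis_def S0_def by blast
  then show ?thesis
    using a_split by (simp add: a'_def)
qed

lemma kt_combination_mem_J_coeffs:
  assumes B0: "finite B0" "B0 \<subseteq> Bs"
  shows "k \<le> n \<Longrightarrow> \<forall>b\<in>B0. a b \<in> ktset \<Longrightarrow> tpow (n - k) * (\<Sum>b\<in>B0. a b * b) \<in> J
    \<Longrightarrow> \<forall>b\<in>B0. \<exists>q\<in>ktset. a b = tpow k * q"
proof (induction k arbitrary: a)
  case 0
  then show ?case
    by auto
next
  case (Suc k)
  define a' where "a' b = contract (tpow 1) (a b)" for b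
  have a: "\<forall>b\<in>B0. a b = tpow 1 * a' b"
    unfolding a'_def using kt_combination_coeffs_divisible_by_t[OF B0 Suc.prems(2) _ Suc.prems(3)]
      Suc.prems(1) by simp
  have "\<forall>b\<in>B0. a' b \<in> ktset"
    using Suc.prems(2) unfolding a'_def ktset_def by (blast intro: polys_in_contract)
  moreover have "tpow (n - Suc k) * (\<Sum>b\<in>B0. a b * b) = tpow (n - k) * (\<Sum>b\<in>B0. a' b * b)"
    using Suc.prems(1) a
    by (simp add: sum_distrib_left mult.assoc[symmetric] tpow_mult Suc_diff_Suc cong: sum.cong)
  ultimately have "\<forall>b\<in>B0. \<exists>q\<in>ktset. a' b = tpow k * q"
    using Suc.IH Suc.prems by simp
  show ?case
  proof
    fix b assume b: "b \<in> B0"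
    then obtain q where q: "q \<in> ktset" "a' b = tpow k * q"
      using \<open>\<forall>b\<in>B0. \<exists>q\<in>ktset. a' b = tpow k * q\<close> by blast
    then have "a b = tpow (Suc k) * q"
      using a b by (simp add: mult.assoc[symmetric] tpow_mult)
    then show "\<exists>q\<in>ktset. a b = tpow (Suc k) * q"
      using q(1) by blast
  qed
qed

end

lemma free_extension_if_lift:
  assumes lift: "\<And>e. e \<in> IB \<Longrightarrow> \<exists>h\<in>Rset r. contract e G = contract h FB"
  shows "free_extension r n J IB"
proof -
  obtain Bs where Bs: "quotient_basis r IB Bs"
    using quotient_basis_Ann_exists unfolding IB_def by blast
  have sub: "Bs \<subseteq> Sset r"
    using Bs Rset_imp_Sset unfolding quotient_basis_def by blast
  have span: "\<forall>s\<in>Sset r. \<exists>Bs0 a. finite Bs0 \<and> Bs0 \<subseteq> Bs \<and> (\<forall>b\<in>Bs0. a b \<in> ktset)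
      \<and> s - (\<Sum>b\<in>Bs0. a b * b) \<in> J"
  proof
    fix s :: "'k mpoly" assume "s \<in> Sset r"
    then obtain c where "c \<in> kt_combinations Bs" "s - c \<in> J"
      using Sset_subset_kt_span_mod_J[OF Bs lift] unfolding kt_span_mod_J_def by blast
    then show "\<exists>Bs0 a. finite Bs0 \<and> Bs0 \<subseteq> Bs \<and> (\<forall>b\<in>Bs0. a b \<in> ktset)
        \<and> s - (\<Sum>b\<in>Bs0. a b * b) \<in> J"
      unfolding kt_combinations_def by blast
  qed
  have indep: "\<forall>Bs0 a. finite Bs0 \<and> Bs0 \<subseteq> Bs \<and> (\<forall>b\<in>Bs0. a b \<in> ktset)
      \<and> (\<Sum>b\<in>Bs0. a b * b) \<in> J \<longrightarrow> (\<forall>b\<in>Bs0. \<exists>q\<in>ktset. a b = tpow n * q)"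
  proof (intro allI impI, elim conjE)
    fix Bs0 and a :: "'k mpoly \<Rightarrow> 'k mpoly"
    assume "finite Bs0" "Bs0 \<subseteq> Bs" "\<forall>b\<in>Bs0. a b \<in> ktset" "(\<Sum>b\<in>Bs0. a b * b) \<in> J"
    then show "\<forall>b\<in>Bs0. \<exists>q\<in>ktset. a b = tpow n * q"
      using kt_combination_mem_J_coeffs[OF Bs, of Bs0 n a] by simp
  qed
  have surj: "\<forall>g\<in>Rset r. \<exists>s\<in>Sset r. t_to_0 s - g \<in> IB"
  proof
    fix g :: "'k mpoly" assume "g \<in> Rset r"
    then show "\<exists>s\<in>Sset r. t_to_0 s - g \<in> IB"
      by (intro bexI[of _ g] Rset_imp_Sset) (simp_all add: t_to_0_t_free Rset_t_free IB_iff Rset_def)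
  qed
  have kernel: "\<forall>s\<in>Sset r. t_to_0 s \<in> IB \<longleftrightarrow> (\<exists>u\<in>Sset r. s - tpow 1 * u \<in> J)"
    using t_to_0_mem_IB mem_tC_if_t_to_0_mem_IB[OF lift] by blast
  show ?thesis
    unfolding free_extension_def using sub span indep surj kernel
    by (intro conjI exI[of _ Bs]) assumption+
qed

lemma lift_if_free_extension:
  assumes "free_extension r n J IB" and e: "e \<in> IB"
  shows "\<exists>h. contract e G = contract h FB"
proof -
  have "e \<in> Sset r" "t_to_0 e = e"
    using e by (auto simp: IB_iff Rset_imp_Sset t_to_0_t_free Rset_t_free)
  then obtain u where "e - tpow 1 * u \<in> J"
    using assms unfolding free_extension_def by metis
  then show ?thesis
    using contract_G_eq_if_mem_J[OF e] by blast
qed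

end

theorem corollary2p5:
  fixes r n jB :: nat and FB G :: "'k::field mpoly"
  assumes "n \<ge> 2"
    and "FB \<in> Rset r" and "homogeneous jB FB"
    and "G \<in> Rset r" and "homogeneous (jB + n - 1) G"
  shows "free_extension r n (Ann {0..r} (tpow (n - 1) * FB + G)) (Ann {1..r} FB)
         \<longleftrightarrow> (\<forall>p\<in>ideal_sq (Ann {1..r} FB). contract p G = 0)"
proof -
  interpret free_extension_setting r n FB G
    using assms by unfold_locales
  have "free_extension r n J IB \<longleftrightarrow> (\<forall>p\<in>ideal_sq IB. contract p G = 0)"
    using lift_if_free_extension ideal_sq_contract_G_eq_0
      free_extension_if_lift contract_G_in_contract_image by blast
  then show ?thesis
    unfolding J_def F_def IB_def .
qed

end
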